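(* Let $R$ be a $*$-ring. If ${\rm psr}(R)=1$, then $R$ is $*$-clean.
   Context: A $*$-ring is a ring with identity with an involution $*$. A projection is $p$ with $p^2=p=p^*$. $R$ is $*$-clean if every element is the sum of a projection and a unit. ${\rm psr}(R)=1$ means: for any $a,b\in R$ with $aR+bR=R$ there is a projection $p$ such that $a+bp$ is a unit. *)

theory Defs
  imports Main
begin

definition is_involution :: "('a::ring_1 \<Rightarrow> 'a) \<Rightarrow> bool" where
  "is_involution s \<longleftrightarrow>
     (\<forall>x y. s (x + y) = s x + s y) \<and>
     (\<forall>x y. s (x * y) = s y * s x) \<and>
     (\<forall>x. s (s x) = x)"

definition is_unit :: "'a::ring_1 \<Rightarrow> bool" where
  "is_unit u \<longleftrightarrow> (\<exists>v. u * v = 1 \<and> v * u = 1)"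

definition is_projection :: "('a::ring_1 \<Rightarrow> 'a) \<Rightarrow> 'a \<Rightarrow> bool" where
  "is_projection s p \<longleftrightarrow> p * p = p \<and> s p = p"

definition star_clean :: "('a::ring_1 \<Rightarrow> 'a) \<Rightarrow> bool" where
  "star_clean s \<longleftrightarrow> (\<forall>a. \<exists>p u. is_projection s p \<and> is_unit u \<and> a = p + u)"

text \<open>psr(R) = 1: whenever aR + bR = R there is a projection p with a + bp a unit.
  aR + bR = R is equivalent to 1 \<in> aR + bR, i.e. a x + b y = 1 for some x, y.\<close>
definition psr_one :: "('a::ring_1 \<Rightarrow> 'a) \<Rightarrow> bool" where
  "psr_one s \<longleftrightarrow> (\<forall>a b. (\<exists>x y. a * x + b * y = 1) \<longrightarrow>
                      (\<exists>p. is_projection s p \<and> is_unit (a + b * p)))"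

end

theory Submission
  imports Defs
begin

text \<open>Apply psr(R) = 1 to the pair (a, -1), which generates R trivially since
  a 0 + (-1)(-1) = 1: it yields a projection p with a - p a unit, and
  a = p + (a - p).\<close>

lemma psr_one_unit_diff_projection:
  assumes "psr_one s"
  obtains p where "is_projection s p" and "is_unit (a - p)"
proof -
  have "a * 0 + (-1) * (-1) = 1" by simp
  then obtain p where "is_projection s p" and "is_unit (a + (-1) * p)"
    using assms unfolding psr_one_def by blast
  then show thesis using that by simp
qed

theorem proposition4p4:
  fixes s :: "'a::ring_1 \<Rightarrow> 'a"
  assumes "is_involution s"
    and "psr_one s"
  shows "star_clean s"
  unfolding star_clean_def
proof
  fix a :: 'a
  obtain p where "is_projection s p" and "is_unit (a - p)"
    using psr_one_unit_diff_projection[OF assms(2)] .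
  moreover have "a = p + (a - p)" by simp
  ultimately show "\<exists>p u. is_projection s p \<and> is_unit u \<and> a = p + u" by blast
qed

end
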